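(* Let $k\ge 2$, let $\boldsymbol\mu\in\mathbb{R}^k$ and let $\boldsymbol\Sigma$ be a symmetric positive definite $k\times k$ matrix. Let $n\ge2$, let $\alpha_1,\dots,\alpha_n>0$ be pairwise distinct, $\beta_1,\dots,\beta_n>0$ with $\sum_i\beta_i=1$, and $\phi_1,\dots,\phi_n>0$. Set $\boldsymbol\beta=(\beta_1,\dots,\beta_n)'$, $\mathbf{A}_0=\mathrm{diag}(\alpha_1,\dots,\alpha_n)$, $\boldsymbol\Phi=\mathrm{diag}(\phi_1,\dots,\phi_n)$, $\mathbf{B}=\mathrm{diag}(\beta_1,\dots,\beta_n)$, $\bar\phi=\sum_i\beta_i\phi_i$, $$\mathbf{A}=(\mathbf{A}_0+\boldsymbol\Phi)\mathbf{B}+(\bar\phi\mathbf{I}_n-2\boldsymbol\Phi)\boldsymbol\beta\boldsymbol\beta',\qquad \mathbf{A}_\phi=(\mathbf{A}+\mathbf{A}')/2,$$ and $\mathbf{Q}=\boldsymbol\Sigma^{-1}-\dfrac{\boldsymbol\Sigma^{-1}\mathbf{1}\mathbf{1}'\boldsymbol\Sigma^{-1}}{\mathbf{1}'\boldsymbol\Sigma^{-1}\mathbf{1}}$, where $\mathbf{1}\in\mathbb{R}^k$ and $\mathbf{1}_n\in\mathbb{R}^n$ are vectors of ones. Consider the problem of maximizing, over $k\times n$ real matrices $\mathbf{W}$, $$EU^*(\mathbf{W})=\boldsymbol\beta'\mathbf{W}'\boldsymbol\mu-\frac12\operatorname{tr}(\mathbf{A}\mathbf{W}'\boldsymbol\Sigma\mathbf{W})\quad\text{subject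 to}\quad \mathbf{W}'\mathbf{1}=\mathbf{1}_n.$$ Then $\mathbf{A}_\phi$ is symmetric and positive definite, and the optimal solution is $$\mathcal{W}^*=\frac{\boldsymbol\Sigma^{-1}\mathbf{1}}{\mathbf{1}'\boldsymbol\Sigma^{-1}\mathbf{1}}\mathbf{1}_n'+\mathbf{Q}\boldsymbol\mu\,(\boldsymbol\beta'\mathbf{A}_\phi^{-1}).$$
   Context: Here $\boldsymbol\mu$ and $\boldsymbol\Sigma$ are the mean vector and covariance matrix of the returns of $k$ risky assets; column $i$ of $\mathbf{W}$ is the portfolio weight vector of investor $i$ (risk aversion $\alpha_i$, wealth share $\beta_i$, mimicking coefficient $\phi_i$), and $EU^*$ is the aggregate (wealth-weighted) mean-variance objective of the investors, each penalizing the $\boldsymbol\Sigma$-weighted squared deviation of his portfolio from the aggregate portfolio $\mathbf{W}\boldsymbol\beta$. *)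

theory Defs
  imports "HOL-Analysis.Analysis"
begin

definition sym_pos_def_mat :: "real^'n^'n \<Rightarrow> bool" where
  "sym_pos_def_mat M \<longleftrightarrow> transpose M = M \<and> (\<forall>x. x \<noteq> 0 \<longrightarrow> x \<bullet> (M *v x) > 0)"

definition diag_mat :: "real^'n \<Rightarrow> real^'n^'n" where
  "diag_mat v = (\<chi> i j. if i = j then v $ i else 0)"

definition outer :: "real^'m \<Rightarrow> real^'n \<Rightarrow> real^'n^'m" where
  "outer a b = (\<chi> i j. a $ i * b $ j)"

definition A_mat :: "real^'n \<Rightarrow> real^'n \<Rightarrow> real^'n \<Rightarrow> real^'n^'n" where
  "A_mat alpha beta phi =
     (diag_mat alpha + diag_mat phi) ** diag_mat beta
     + ((beta \<bullet> phi) *\<^sub>R mat 1 - 2 *\<^sub>R diag_mat phi) ** outer beta beta"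

definition A_phi :: "real^'n \<Rightarrow> real^'n \<Rightarrow> real^'n \<Rightarrow> real^'n^'n" where
  "A_phi alpha beta phi = (1/2) *\<^sub>R (A_mat alpha beta phi + transpose (A_mat alpha beta phi))"

definition Q_mat :: "real^'k^'k \<Rightarrow> real^'k^'k" where
  "Q_mat S = matrix_inv S
     - (1 / (vec 1 \<bullet> (matrix_inv S *v vec 1))) *\<^sub>R
         (matrix_inv S ** outer (vec 1) (vec 1) ** matrix_inv S)"

definition EU :: "real^'k \<Rightarrow> real^'k^'k \<Rightarrow> real^'n^'n \<Rightarrow> real^'n \<Rightarrow> real^'n^'k \<Rightarrow> real" where
  "EU mu S A beta W = beta \<bullet> (transpose W *v mu) - (1/2) * trace (A ** transpose W ** S ** W)"

definition feasible :: "real^'n^'k \<Rightarrow> bool" where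
  "feasible W \<longleftrightarrow> transpose W *v vec 1 = vec 1"

definition W_star :: "real^'k \<Rightarrow> real^'k^'k \<Rightarrow> real^'n \<Rightarrow> real^'n \<Rightarrow> real^'n \<Rightarrow> real^'n^'k" where
  "W_star mu S alpha beta phi =
     outer ((1 / (vec 1 \<bullet> (matrix_inv S *v vec 1))) *\<^sub>R (matrix_inv S *v vec 1)) (vec 1)
     + outer (Q_mat S *v mu) (beta v* matrix_inv (A_phi alpha beta phi))"

end

theory Submission
  imports Defs
begin

(* EU is a quadratic function of W with quadratic part -1/2 tr(A W' Sigma W), so on the affine set
   of feasible W it suffices to show that W_star is feasible and satisfies the first-order
   condition: for every feasible direction D (that is, D' 1 = 0) the linear part
   beta' D' mu - tr(A_phi W_star' Sigma D) of EU(W_star + D) - EU(W_star) vanishes. What remains is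
   -1/2 tr(A D' Sigma D), which is negative for D \<noteq> 0 because for every symmetric positive
   semidefinite G
     tr(A G) = sum_i alpha_i beta_i G_ii + sum_i phi_i beta_i (e_i - beta)' G (e_i - beta).
   The choice G = x x' gives positive definiteness of A_phi, the choice G = D' Sigma D strict
   concavity. *)

lemma transpose_outer: "transpose (outer a b) = outer b a"
  by (simp add: outer_def transpose_def vec_eq_iff)

lemma matrix_mul_outer: "(M::real^'n^'m) ** outer a b = outer (M *v a) b"
  by (simp add: outer_def matrix_matrix_mult_def matrix_vector_mult_def vec_eq_iff
      sum_distrib_left mult_ac)

lemma outer_matrix_mul: "outer a b ** (M::real^'n^'m) = outer a (b v* M)"
  by (simp add: outer_def matrix_matrix_mult_def vector_matrix_mult_def vec_eq_iff
      sum_distrib_left mult_ac)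

lemma outer_matrix_vector_mult: "outer a b *v x = (b \<bullet> x) *\<^sub>R a"
  by (simp add: outer_def matrix_vector_mult_def inner_vec_def vec_eq_iff sum_distrib_left mult_ac)

lemma vector_matrix_mult_outer: "x v* outer a b = (x \<bullet> a) *\<^sub>R b"
  by (simp add: outer_def vector_matrix_mult_def inner_vec_def vec_eq_iff sum_distrib_left mult_ac)

lemma trace_outer_mul: "trace (outer a b ** (M::real^'n^'m)) = b \<bullet> (M *v a)"
  by (simp add: trace_def outer_def matrix_matrix_mult_def matrix_vector_mult_def inner_vec_def
      sum_distrib_left mult_ac) (rule sum.swap)

lemma transpose_add: "transpose (A + B) = transpose A + transpose (B::real^'n^'m)"
  by (simp add: transpose_def vec_eq_iff)

lemma matrix_add_rdistrib: "(B + C) ** (A::real^'p^'n) = B ** A + C ** (A::real^'p^'n)"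
  by (vector matrix_matrix_mult_def sum.distrib[symmetric] field_simps)

lemma trace_scaleR: "trace (c *\<^sub>R (M::real^'n^'n)) = c * trace M"
  by (simp add: trace_def sum_distrib_left)

lemma trace_transpose: "trace (transpose (M::real^'n^'n)) = trace M"
  by (simp add: trace_def transpose_def)

lemma symmetric_vector_matrix_mult: "transpose (M::real^'n^'n) = M \<Longrightarrow> x v* M = M *v x"
  by (metis vector_transpose_matrix)

lemma diag_mat_nth: "diag_mat v $ i $ j = (if i = j then v$i else 0)"
  by (simp add: diag_mat_def)

lemma matrix_mul_diag_mat_nth: "(M ** diag_mat v) $ i $ j = M$i$j * v$j"
  by (simp add: matrix_matrix_mult_def diag_mat_def if_distrib[where f="\<lambda>a. _ * a"] cong: if_cong)

lemma diag_mat_mult_vector: "diag_mat v *v x = (\<chi> i. v$i * x$i)"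
  by (simp add: diag_mat_def matrix_vector_mult_def vec_eq_iff if_distrib[where f="\<lambda>a. a * _"]
      cong: if_cong)

lemma matrix_inv_right:
  assumes "invertible (M::real^'n^'n)"
  shows "M ** matrix_inv M = mat 1"
proof -
  have "\<exists>M'. M ** M' = mat 1 \<and> M' ** M = mat 1" using assms invertible_def by blast
  then show ?thesis unfolding matrix_inv_def by (rule someI2_ex) blast
qed

lemma symmetric_matrix_inv_transpose_right:
  assumes "invertible (M::real^'n^'n)" "transpose M = M"
  shows "M ** transpose (matrix_inv M) = mat 1"
proof -
  have "matrix_inv M ** M = mat 1"
    using matrix_inv_right[OF assms(1)] matrix_left_right_inverse by blast
  then show ?thesis by (metis assms(2) matrix_transpose_mul transpose_mat)
qed

lemma invertible_if_pos_def:
  assumes "\<forall>x. x \<noteq> 0 \<longrightarrow> x \<bullet> ((M::real^'n^'n) *v x) > 0"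
  shows "invertible M"
proof -
  have "\<forall>x. M *v x = 0 \<longrightarrow> x = 0" using assms by (metis inner_zero_right less_irrefl)
  then show ?thesis using matrix_left_invertible_ker invertible_left_inverse by blast
qed

lemma invertible_if_sym_pos_def_mat: "sym_pos_def_mat M \<Longrightarrow> invertible M"
  unfolding sym_pos_def_mat_def by (blast intro: invertible_if_pos_def)

lemma matrix_inv_pos_def:
  assumes "\<forall>x. x \<noteq> 0 \<longrightarrow> x \<bullet> ((M::real^'n^'n) *v x) > 0" and "x \<noteq> 0"
  shows "x \<bullet> (matrix_inv M *v x) > 0"
proof -
  define y where "y = matrix_inv M *v x"
  have My: "M *v y = x"
    unfolding y_def using matrix_inv_right[OF invertible_if_pos_def[OF assms(1)]]
    by (simp add: matrix_vector_mul_assoc)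
  then have "y \<noteq> 0" using \<open>x \<noteq> 0\<close> by auto
  then have "y \<bullet> (M *v y) > 0" using assms(1) by blast
  then show ?thesis using My y_def by (simp add: inner_commute)
qed

lemma quadratic_form_axis: "axis i 1 \<bullet> ((M::real^'n^'n) *v axis i 1) = M$i$i"
  by (simp add: matrix_vector_mult_basis inner_axis' column_def)

lemma quadratic_form_axis_minus:
  assumes "transpose (G::real^'n^'n) = G"
  shows "(axis i 1 - v) \<bullet> (G *v (axis i 1 - v)) = G$i$i - 2 * (G *v v)$i + v \<bullet> (G *v v)"
proof -
  have "v \<bullet> (G *v axis i 1) = (G *v v)$i"
    by (metis assms dot_lmul_matrix inner_axis inner_real_def mult.right_neutral
        symmetric_vector_matrix_mult)
  then show ?thesis
    by (simp add: matrix_vector_mult_diff_distrib inner_diff_left inner_diff_right inner_axis'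
        matrix_vector_mult_basis column_def inner_commute)
qed

lemma quadratic_form_eq_trace_outer: "x \<bullet> ((M::real^'n^'n) *v x) = trace (M ** outer x x)"
  by (simp add: trace_mul_sym[of M] trace_outer_mul)

lemma quadratic_form_outer_nonneg: "y \<bullet> (outer x x *v y) \<ge> 0"
  by (simp add: outer_matrix_vector_mult inner_commute)

lemma quadratic_form_congruence:
  "x \<bullet> ((transpose D ** S ** D) *v x) = (D *v x) \<bullet> ((S::real^'k^'k) *v (D *v x))"
  by (metis dot_lmul_matrix inner_commute matrix_vector_mul_assoc transpose_matrix_vector)

lemma congruence_psd:
  assumes "sym_pos_def_mat (S::real^'k^'k)"
  shows "transpose (transpose D ** S ** D) = transpose D ** S ** D"
    and "x \<bullet> ((transpose D ** S ** D) *v x) \<ge> 0"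
    and "D \<noteq> 0 \<Longrightarrow> \<exists>j. (transpose D ** S ** D) $ j $ j > 0"
proof -
  have S: "transpose S = S" "\<And>y. y \<noteq> 0 \<Longrightarrow> y \<bullet> (S *v y) > 0"
    using assms unfolding sym_pos_def_mat_def by auto
  show "transpose (transpose D ** S ** D) = transpose D ** S ** D"
    by (simp add: matrix_transpose_mul S(1) matrix_mul_assoc)
  show "x \<bullet> ((transpose D ** S ** D) *v x) \<ge> 0"
    unfolding quadratic_form_congruence using S(2) by (cases "D *v x = 0") (auto intro: less_imp_le)
  assume "D \<noteq> 0"
  then obtain i j where "D $ i $ j \<noteq> 0" by (metis vec_eq_iff zero_index)
  then have "D *v axis j 1 \<noteq> 0" by (metis column_def matrix_vector_mult_basis vec_lambda_beta zero_index)
  then have "axis j 1 \<bullet> ((transpose D ** S ** D) *v axis j 1) > 0"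
    unfolding quadratic_form_congruence using S(2) by blast
  then show "\<exists>j. (transpose D ** S ** D) $ j $ j > 0"
    unfolding quadratic_form_axis ..
qed

lemma EU_add:
  fixes S :: "real^'k^'k" and A :: "real^'n^'n"
  assumes "transpose S = S"
  shows "EU mu S A beta (W + D) = EU mu S A beta W
    + (beta \<bullet> (transpose D *v mu) - trace ((1/2) *\<^sub>R (A + transpose A) ** transpose W ** S ** D))
    - (1/2) * trace (A ** transpose D ** S ** D)"
proof -
  have "trace (A ** transpose D ** S ** W) = trace (transpose (A ** transpose D ** S ** W))"
    by (simp add: trace_transpose)
  also have "\<dots> = trace ((transpose W ** S ** D) ** transpose A)"
    by (simp add: matrix_transpose_mul assms matrix_mul_assoc)
  also have "\<dots> = trace (transpose A ** transpose W ** S ** D)"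
    by (simp add: trace_mul_sym[of _ "transpose A"] matrix_mul_assoc)
  finally have cross: "trace (A ** transpose D ** S ** W) = trace (transpose A ** transpose W ** S ** D)" .
  have "trace (A ** transpose (W + D) ** S ** (W + D)) = trace (A ** transpose W ** S ** W)
      + trace ((A + transpose A) ** transpose W ** S ** D) + trace (A ** transpose D ** S ** D)"
    unfolding transpose_add matrix_add_ldistrib matrix_add_rdistrib trace_add cross by simp
  also have "trace ((A + transpose A) ** transpose W ** S ** D)
      = 2 * trace ((1/2) *\<^sub>R (A + transpose A) ** transpose W ** S ** D)"
    by (simp add: scalar_matrix_assoc[symmetric] trace_scaleR)
  finally have quadratic: "trace (A ** transpose (W + D) ** S ** (W + D)) = trace (A ** transpose W ** S ** W)
      + 2 * trace ((1/2) *\<^sub>R (A + transpose A) ** transpose W ** S ** D)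
      + trace (A ** transpose D ** S ** D)" .
  have linear: "beta \<bullet> (transpose (W + D) *v mu)
      = beta \<bullet> (transpose W *v mu) + beta \<bullet> (transpose D *v mu)"
    unfolding transpose_add matrix_vector_mult_add_rdistrib inner_add_right ..
  show ?thesis unfolding EU_def quadratic linear by (simp add: field_simps)
qed

lemma A_mat_nth:
  "A_mat alpha beta phi $ i $ j =
     (if i = j then (alpha$i + phi$i) * beta$i else 0) + (beta \<bullet> phi - 2 * phi$i) * beta$i * beta$j"
  unfolding A_mat_def matrix_mul_outer
  by (simp add: matrix_mul_diag_mat_nth diag_mat_nth outer_def algebra_simps diag_mat_mult_vector
      scaleR_matrix_vector_assoc[symmetric])

lemma trace_A_mat_mul:
  fixes G :: "real^'n^'n"
  assumes "transpose G = G"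
  shows "trace (A_mat alpha beta phi ** G) =
    (\<Sum>i\<in>UNIV. alpha$i * beta$i * G$i$i)
    + (\<Sum>i\<in>UNIV. phi$i * beta$i * ((axis i 1 - beta) \<bullet> (G *v (axis i 1 - beta))))"
proof -
  have G_sym: "G$j$i = G$i$j" for i j using assms by (metis transpose_def vec_lambda_beta)
  define g where "g = G *v beta"
  have row: "(\<Sum>j\<in>UNIV. A_mat alpha beta phi $ i $ j * G$j$i)
      = (alpha$i + phi$i) * beta$i * G$i$i + (beta \<bullet> phi - 2 * phi$i) * beta$i * g$i" for i
    unfolding g_def
    by (simp add: A_mat_nth ring_distribs sum.distrib sum_subtractf if_distrib[where f="\<lambda>a. _ * a"]
        matrix_vector_mult_def G_sym sum_distrib_left mult_ac cong: if_cong)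
  have "trace (A_mat alpha beta phi ** G) =
      (\<Sum>i\<in>UNIV. (alpha$i + phi$i) * beta$i * G$i$i + (beta \<bullet> phi - 2 * phi$i) * beta$i * g$i)"
    by (simp add: trace_def matrix_matrix_mult_def row)
  also have "\<dots> =
      (\<Sum>i\<in>UNIV. alpha$i * beta$i * G$i$i) + (\<Sum>i\<in>UNIV. phi$i * beta$i * G$i$i)
      + (beta \<bullet> phi) * (beta \<bullet> g) - 2 * (\<Sum>i\<in>UNIV. phi$i * beta$i * g$i)"
    by (simp add: inner_vec_def [of beta g] algebra_simps sum.distrib sum_subtractf
        sum_distrib_left)
  also have "\<dots> = (\<Sum>i\<in>UNIV. alpha$i * beta$i * G$i$i)
      + (\<Sum>i\<in>UNIV. phi$i * beta$i * (G$i$i - 2 * g$i + beta \<bullet> g))"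
    by (simp add: inner_vec_def [of beta phi] algebra_simps sum.distrib sum_subtractf
        sum_distrib_left sum_distrib_right)
  finally show ?thesis by (simp add: quadratic_form_axis_minus[OF assms] g_def)
qed

lemma trace_A_mat_mul_pos:
  fixes G :: "real^'n^'n"
  assumes "\<forall>i. alpha $ i > 0" "\<forall>i. beta $ i > 0" "\<forall>i. phi $ i > 0"
    and "transpose G = G" "\<forall>x. x \<bullet> (G *v x) \<ge> 0" "G$j$j > 0"
  shows "trace (A_mat alpha beta phi ** G) > 0"
proof -
  have "0 < (\<Sum>i\<in>UNIV. alpha$i * beta$i * G$i$i)"
  proof (rule sum_pos2[where i=j])
    have "G$i$i \<ge> 0" for i
      using assms(5) quadratic_form_axis by metis
    then show "0 \<le> alpha$i * beta$i * G$i$i" for i using assms(1,2) by (simp add: less_imp_le)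
  qed (use assms(1,2,6) in auto)
  moreover have "0 \<le> (\<Sum>i\<in>UNIV. phi$i * beta$i * ((axis i 1 - beta) \<bullet> (G *v (axis i 1 - beta))))"
    using assms(2,3,5) by (intro sum_nonneg) (simp add: less_imp_le)
  ultimately show ?thesis unfolding trace_A_mat_mul[OF assms(4)] by linarith
qed

lemma quadratic_form_A_phi: "x \<bullet> (A_phi alpha beta phi *v x) = x \<bullet> (A_mat alpha beta phi *v x)"
  unfolding A_phi_def
  by (simp add: scaleR_matrix_vector_assoc[symmetric] matrix_vector_mult_add_rdistrib inner_add_right
      dot_lmul_matrix[symmetric] inner_commute[of "x v* _"])

lemma transpose_A_phi: "transpose (A_phi alpha beta phi) = A_phi alpha beta phi"
  unfolding A_phi_def by (simp add: transpose_scalar transpose_add add.commute)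

lemma sym_pos_def_mat_A_phi:
  fixes alpha beta phi :: "real^'n"
  assumes "\<forall>i. alpha $ i > 0" "\<forall>i. beta $ i > 0" "\<forall>i. phi $ i > 0"
  shows "sym_pos_def_mat (A_phi alpha beta phi)"
  unfolding sym_pos_def_mat_def
proof (intro conjI allI impI transpose_A_phi)
  fix x :: "real^'n" assume "x \<noteq> 0"
  then obtain j where "x$j \<noteq> 0" by (metis vec_eq_iff zero_index)
  then have jj: "outer x x $ j $ j > 0" by (simp add: outer_def) (metis not_real_square_gt_zero)
  show "x \<bullet> (A_phi alpha beta phi *v x) > 0"
    unfolding quadratic_form_A_phi unfolding quadratic_form_eq_trace_outer
    by (rule trace_A_mat_mul_pos[OF assms transpose_outer _ jj]) (simp add: quadratic_form_outer_nonneg)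
qed

lemma Q_mat_mult_vector:
  "Q_mat S *v x = matrix_inv S *v x
     - ((vec 1 \<bullet> (matrix_inv S *v x)) / (vec 1 \<bullet> (matrix_inv S *v vec 1)))
       *\<^sub>R (matrix_inv S *v vec 1)"
  unfolding Q_mat_def
  by (simp add: matrix_vector_mult_diff_rdistrib scaleR_matrix_vector_assoc[symmetric]
      matrix_vector_mul_assoc[symmetric] outer_matrix_vector_mult matrix_vector_mult_scaleR)

lemma feasible_W_star:
  fixes S :: "real^'k^'k"
  assumes "sym_pos_def_mat S"
  shows "feasible (W_star mu S alpha beta phi)"
proof -
  define T where "T = matrix_inv S"
  define c where "c = vec 1 \<bullet> (T *v vec 1)"
  have "(vec 1 :: real^'k) \<noteq> 0" by (simp add: vec_eq_iff)
  then have "c > 0"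
    unfolding c_def T_def using assms matrix_inv_pos_def unfolding sym_pos_def_mat_def by blast
  then have "vec 1 \<bullet> ((1 / c) *\<^sub>R (T *v vec 1)) = 1"
    and "vec 1 \<bullet> (Q_mat S *v mu) = 0"
    by (simp_all add: c_def T_def Q_mat_mult_vector inner_diff_right)
  then show ?thesis
    unfolding feasible_def W_star_def T_def c_def
    by (simp add: vector_matrix_mult_add_rdistrib vector_matrix_mult_outer)
qed

lemma W_star_stationary:
  fixes S :: "real^'k^'k" and D :: "real^'n^'k"
  assumes "transpose S = S" "invertible S" "invertible (A_phi alpha beta phi)"
    and "transpose D *v vec 1 = 0"
  shows "trace (A_phi alpha beta phi ** transpose (W_star mu S alpha beta phi) ** S ** D)
       = beta \<bullet> (transpose D *v mu)"
proof -
  define T where "T = matrix_inv S"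
  define c where "c = vec 1 \<bullet> (T *v vec 1)"
  define Ap where "Ap = A_phi alpha beta phi"
  have ST: "S ** T = mat 1" unfolding T_def using matrix_inv_right[OF assms(2)] .
  have ApP: "Ap ** transpose (matrix_inv Ap) = mat 1"
    unfolding Ap_def using symmetric_matrix_inv_transpose_right[OF assms(3) transpose_A_phi] .
  have mvp_S: "((1/c) *\<^sub>R (T *v vec 1)) v* S = (1/c) *\<^sub>R vec 1"
    by (simp add: scaleR_vector_matrix_assoc symmetric_vector_matrix_mult[OF assms(1)]
        matrix_vector_mult_scaleR matrix_vector_mul_assoc ST)
  have Q_mu_S: "(Q_mat S *v mu) v* S = mu - ((vec 1 \<bullet> (T *v mu)) / c) *\<^sub>R vec 1"
    by (simp add: symmetric_vector_matrix_mult[OF assms(1)] Q_mat_mult_vector T_def[symmetric]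
        c_def matrix_vector_mult_diff_distrib matrix_vector_mult_scaleR
        matrix_vector_mul_assoc ST)
  have A_phi_inv_beta: "Ap *v (beta v* matrix_inv Ap) = beta"
    by (metis ApP matrix_vector_mul_assoc matrix_vector_mul_lid transpose_matrix_vector)
  have ApW: "Ap ** transpose (W_star mu S alpha beta phi) ** S
      = outer (Ap *v vec 1) ((1/c) *\<^sub>R vec 1)
        + outer beta (mu - ((vec 1 \<bullet> (T *v mu)) / c) *\<^sub>R vec 1)"
    unfolding W_star_def
    \<comment> \<open>without \<open>vec_1\<close>, \<open>vec 1\<close> would become \<open>1\<close> before the local facts could match\<close>
    by (simp del: vec_1 add: transpose_add transpose_outer matrix_add_ldistrib matrix_add_rdistrib
        matrix_mul_outer outer_matrix_mul mvp_S Q_mu_S A_phi_inv_beta T_def[symmetric] c_def[symmetric]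
        Ap_def[symmetric])
  have D_sum_zero: "vec 1 \<bullet> (D *v x) = 0" for x
    using assms(4) by (simp add: dot_lmul_matrix[symmetric])
  have "trace (Ap ** transpose (W_star mu S alpha beta phi) ** S ** D)
      = ((1/c) *\<^sub>R vec 1) \<bullet> (D *v (Ap *v vec 1))
        + (mu - ((vec 1 \<bullet> (T *v mu)) / c) *\<^sub>R vec 1) \<bullet> (D *v beta)"
    unfolding ApW matrix_add_rdistrib trace_add trace_outer_mul ..
  also have "\<dots> = mu \<bullet> (D *v beta)"
    using D_sum_zero by (simp del: vec_1 add: inner_diff_left)
  also have "\<dots> = beta \<bullet> (transpose D *v mu)"
    by (metis dot_lmul_matrix inner_commute transpose_matrix_vector)
  finally show ?thesis unfolding Ap_def .
qed

theorem theorem1: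
  fixes mu :: "real^'k" and S :: "real^'k^'k"
    and alpha beta phi :: "real^'n"
  assumes "CARD('k) \<ge> 2" and "CARD('n) \<ge> 2"
    and "sym_pos_def_mat S"
    and "\<forall>i. alpha $ i > 0" and "inj (\<lambda>i. alpha $ i)"
    and "\<forall>i. beta $ i > 0" and "(\<Sum>i\<in>UNIV. beta $ i) = 1"
    and "\<forall>i. phi $ i > 0"
  shows "sym_pos_def_mat (A_phi alpha beta phi)
    \<and> feasible (W_star mu S alpha beta phi)
    \<and> (\<forall>W. feasible W \<longrightarrow> W \<noteq> W_star mu S alpha beta phi \<longrightarrow>
          EU mu S (A_mat alpha beta phi) beta W
            < EU mu S (A_mat alpha beta phi) beta (W_star mu S alpha beta phi))"
proof (intro conjI allI impI)
  note S = \<open>sym_pos_def_mat S\<close>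
    and pos = \<open>\<forall>i. alpha $ i > 0\<close> \<open>\<forall>i. beta $ i > 0\<close> \<open>\<forall>i. phi $ i > 0\<close>
  define A where "A = A_mat alpha beta phi"
  define W\<^sub>s where "W\<^sub>s = W_star mu S alpha beta phi"
  show A_phi: "sym_pos_def_mat (A_phi alpha beta phi)" using sym_pos_def_mat_A_phi[OF pos] .
  show feasible: "feasible (W_star mu S alpha beta phi)" using feasible_W_star[OF S] .
  fix W assume "feasible W" "W \<noteq> W_star mu S alpha beta phi"
  define D where "D = W - W\<^sub>s"
  have "D \<noteq> 0" using \<open>W \<noteq> _\<close> unfolding D_def W\<^sub>s_def by simp
  have "transpose D *v vec 1 = 0"
    using \<open>feasible W\<close> feasible unfolding feasible_def D_def W\<^sub>s_def
    by (simp add: vector_matrix_mult_diff_rdistrib)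
  have "transpose S = S" using S unfolding sym_pos_def_mat_def by blast
  have stationary:
    "trace (A_phi alpha beta phi ** transpose W\<^sub>s ** S ** D) = beta \<bullet> (transpose D *v mu)"
    unfolding W\<^sub>s_def using W_star_stationary \<open>transpose S = S\<close> \<open>transpose D *v vec 1 = 0\<close>
      invertible_if_sym_pos_def_mat[OF S] invertible_if_sym_pos_def_mat[OF A_phi] by blast
  have "W = W\<^sub>s + D" unfolding D_def by simp
  then have "EU mu S A beta W = EU mu S A beta W\<^sub>s - (1/2) * trace (A ** transpose D ** S ** D)"
    using EU_add[OF \<open>transpose S = S\<close>, of mu A beta W\<^sub>s D]
      stationary[unfolded A_phi_def A_def[symmetric]] by simp
  moreover obtain j where "(transpose D ** S ** D) $ j $ j > 0"
    using congruence_psd(3)[OF S \<open>D \<noteq> 0\<close>] ..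
  then have "trace (A ** (transpose D ** S ** D)) > 0"
    unfolding A_def by (intro trace_A_mat_mul_pos[OF pos] congruence_psd(1,2)[OF S] allI)
  ultimately show "EU mu S (A_mat alpha beta phi) beta W
      < EU mu S (A_mat alpha beta phi) beta (W_star mu S alpha beta phi)"
    unfolding A_def W\<^sub>s_def by (simp add: matrix_mul_assoc)
qed

end
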